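(* Let $h$ be a decreasing solution to the HJB equation. Then there is no non-empty interval $(a,b)\subset[0,\infty)$ such that $h''(z)=0$ for all $z\in(a,b)$.
   Context: Fix $\mu\in\mathbb R$, $\sigma>0$, $u_0>0$, $r>0$, $\beta>0$, $d>0$. The HJB equation is $$-rh(z)-\mu h'(z)+\tfrac{\sigma^2}{2}h''(z)+\sup_{u\in[0,u_0]}\{(\beta+h'(z))u\}=\mathbf 1_{\{z>d\}}.$$ A solution to the HJB equation is a function $h:[0,\infty)\to[\frac{\beta u_0-1}{r},\frac{\beta u_0}{r}]$ that is continuously differentiable on $[0,\infty)$, twice continuously differentiable on $[0,d]$ and on $(d,\infty)$ respectively (with $h'(0),h''(0)$ the right derivatives and $h''(d)$ the left second derivative), and satisfies the HJB equation for all $z\ge0$. *)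

theory Defs
  imports "HOL-Analysis.Analysis"
begin

text \<open>h is a solution to the HJB equation with parameters mu, sigma, u0, r, beta, d;
  dh and d2h are its first and second derivative (dh(0), d2h(0) right derivatives,
  d2h(d) the left second derivative).\<close>
definition hjb_solution ::
  "real \<Rightarrow> real \<Rightarrow> real \<Rightarrow> real \<Rightarrow> real \<Rightarrow> real \<Rightarrow>
   (real \<Rightarrow> real) \<Rightarrow> (real \<Rightarrow> real) \<Rightarrow> (real \<Rightarrow> real) \<Rightarrow> bool" where
  "hjb_solution \<mu> \<sigma> u0 r \<beta> d h dh d2h \<longleftrightarrow>
     (\<forall>z\<ge>0. (\<beta> * u0 - 1) / r \<le> h z \<and> h z \<le> \<beta> * u0 / r) \<and>
     (\<forall>z\<ge>0. (h has_real_derivative dh z) (at z within {0..})) \<and>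
     continuous_on {0..} dh \<and>
     (\<forall>z\<in>{0..d}. (dh has_real_derivative d2h z) (at z within {0..d})) \<and>
     continuous_on {0..d} d2h \<and>
     (\<forall>z>d. (dh has_real_derivative d2h z) (at z)) \<and>
     continuous_on {d<..} d2h \<and>
     (\<forall>z\<ge>0. - r * h z - \<mu> * dh z + \<sigma>\<^sup>2 / 2 * d2h z
               + (SUP u\<in>{0..u0}. (\<beta> + dh z) * u)
             = (if z > d then 1 else 0))"

end

theory Submission
  imports Defs
begin

(* Where h'' vanishes on an interval avoiding d, h' is constant and the equation at two points
   forces h' = 0, so (h, h') sits at the rest point of the equation read as a first-order system.
   By uniqueness (Gronwall applied to the squared distance to the rest point) it stays there up
   to the threshold d. Coming from below, h(d) = \<beta> u0 / r and h'(d) = 0; just right of d the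
   cost jumps to 1 while all other terms are still small, so h'' > 0 and h' turns positive.
   Coming from above, h(d) = (\<beta> u0 - 1) / r and the equation at d gives h''(d) < 0, so h' is
   positive just left of d. Either way h is not decreasing. *)

lemma SUP_linear_0_atLeastAtMost:
  fixes c u0 :: real
  assumes "0 \<le> u0"
  shows "(SUP u\<in>{0..u0}. c * u) = max 0 (c * u0)"
proof (rule cSup_eq_maximum)
  show "max 0 (c * u0) \<in> (\<lambda>u. c * u) ` {0..u0}"
  proof (cases "0 \<le> c * u0")
    case True
    then show ?thesis using assms by (auto simp: max_def)
  next
    case False
    then have "max 0 (c * u0) = c * 0" by simp
    then show ?thesis using assms by (metis atLeastAtMost_iff image_eqI order_refl)
  qed
next
  fix x assume "x \<in> (\<lambda>u. c * u) ` {0..u0}"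
  then obtain u where u: "0 \<le> u" "u \<le> u0" "x = c * u" by auto
  have "c * u \<le> c * u0 \<or> c * u \<le> 0"
    using mult_left_mono[OF u(2), of c] mult_nonpos_nonneg[OF _ u(1), of c] by linarith
  then show "x \<le> max 0 (c * u0)"
    using u(3) by linarith
qed

lemma gronwall_forward:
  fixes w w' :: "real \<Rightarrow> real"
  assumes "x \<le> y" "continuous_on {x..y} w"
    and "\<And>z. z \<in> {x<..<y} \<Longrightarrow> (w has_real_derivative w' z) (at z)"
    and "\<And>z. z \<in> {x<..<y} \<Longrightarrow> w' z \<le> K * w z"
  shows "w y \<le> exp (K * (y - x)) * w x"
proof -
  let ?p = "\<lambda>z. exp (- K * z) * w z"
  have "?p y \<le> ?p x"
  proof (rule DERIV_nonpos_imp_decreasing_open[OF assms(1)])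
    fix z assume z: "x < z" "z < y"
    have "(?p has_real_derivative exp (- K * z) * (w' z - K * w z)) (at z)"
      using assms(3) z by (auto intro!: derivative_eq_intros simp: algebra_simps)
    moreover have "exp (- K * z) * (w' z - K * w z) \<le> 0"
      using assms(4) z by (simp add: mult_nonneg_nonpos)
    ultimately show "\<exists>l. (?p has_real_derivative l) (at z) \<and> l \<le> 0" by blast
  qed (intro continuous_intros assms(2))
  have "w y = exp (K * y) * ?p y"
    by (simp add: exp_minus_inverse mult.assoc[symmetric])
  also have "\<dots> \<le> exp (K * y) * ?p x"
    using \<open>?p y \<le> ?p x\<close> by simp
  also have "\<dots> = exp (K * (y - x)) * w x"
    by (simp add: right_diff_distrib exp_diff exp_minus field_simps)
  finally show ?thesis .
qed

lemma gronwall_backward: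
  fixes w w' :: "real \<Rightarrow> real"
  assumes "x \<le> y" "continuous_on {x..y} w"
    and "\<And>z. z \<in> {x<..<y} \<Longrightarrow> (w has_real_derivative w' z) (at z)"
    and "\<And>z. z \<in> {x<..<y} \<Longrightarrow> - K * w z \<le> w' z"
  shows "w x \<le> exp (K * (y - x)) * w y"
proof -
  let ?v = "\<lambda>t. w (- t)"
  have "continuous_on {-y..-x} ?v"
    by (rule continuous_on_compose2[OF assms(2) continuous_on_minus[OF continuous_on_id]]) auto
  moreover have "(?v has_real_derivative - w' (- t)) (at t)" if "t \<in> {-y<..<-x}" for t
    using DERIV_chain2[OF assms(3)[of "- t"] DERIV_minus[OF DERIV_ident]] that by simp
  moreover have "- w' (- t) \<le> K * ?v t" if "t \<in> {-y<..<-x}" for t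
    using assms(4)[of "- t"] that by auto
  ultimately have "?v (- x) \<le> exp (K * (- x - - y)) * ?v (- y)"
    using assms(1) by (intro gronwall_forward[where w' = "\<lambda>t. - w' (- t)"]) auto
  then show ?thesis by (simp add: algebra_simps)
qed

lemma gronwall_zero:
  fixes w w' :: "real \<Rightarrow> real"
  assumes "continuous_on {x..y} w"
    and "\<And>z. z \<in> {x<..<y} \<Longrightarrow> (w has_real_derivative w' z) (at z)"
    and "\<And>z. z \<in> {x<..<y} \<Longrightarrow> \<bar>w' z\<bar> \<le> K * w z"
    and "\<And>z. z \<in> {x..y} \<Longrightarrow> 0 \<le> w z"
    and "c \<in> {x..y}" "w c = 0" "z \<in> {x..y}"
  shows "w z = 0"
proof (cases "c \<le> z")
  case True
  have "w z \<le> exp (K * (z - c)) * w c"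
    using True assms(5,7) abs_le_D1[OF assms(3)]
    by (intro gronwall_forward[where w' = w'] continuous_on_subset[OF assms(1)] assms(2)) auto
  then show ?thesis using assms(4,6,7) by force
next
  case False
  have "w z \<le> exp (K * (c - z)) * w c"
    using False assms(5,7) abs_le_D2[OF assms(3)]
    by (intro gronwall_backward[where w' = w'] continuous_on_subset[OF assms(1)] assms(2))
      (auto simp: minus_le_iff)
  then show ?thesis using assms(4,6,7) by force
qed

lemma closed_subinterval_avoiding:
  fixes a b d :: real
  assumes "a < b"
  obtains p q where "a < p" "p < q" "q < b" "d \<notin> {p..q}"
proof -
  define m where "m = (if a < d \<and> d < b then d else b)"
  have "a < m" "m \<le> b" using assms by (auto simp: m_def)
  show ?thesis
  proof
    show "a < a + (m - a) / 3" "a + (m - a) / 3 < a + 2 * (m - a) / 3" "a + 2 * (m - a) / 3 < b"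
      using \<open>a < m\<close> \<open>m \<le> b\<close> by (simp_all add: field_simps)
    show "d \<notin> {a + (m - a) / 3..a + 2 * (m - a) / 3}"
      using assms by (auto simp: m_def field_simps split: if_splits)
  qed
qed

lemma abs_energy_derivative_le:
  fixes g p q C :: real
  assumes "0 \<le> C" "\<bar>q\<bar> \<le> C * (\<bar>g\<bar> + \<bar>p\<bar>)"
  shows "\<bar>2 * g * p + 2 * p * q\<bar> \<le> (1 + 3 * C) * (g\<^sup>2 + p\<^sup>2)"
proof -
  have amgm: "2 * \<bar>g\<bar> * \<bar>p\<bar> \<le> g\<^sup>2 + p\<^sup>2"
    using sum_squares_bound[of "\<bar>g\<bar>" "\<bar>p\<bar>"] by (simp add: power2_eq_square)
  have "\<bar>2 * g * p + 2 * p * q\<bar> \<le> 2 * \<bar>g\<bar> * \<bar>p\<bar> + 2 * \<bar>p\<bar> * (C * (\<bar>g\<bar> + \<bar>p\<bar>))"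
    using mult_left_mono[OF assms(2), of "2 * \<bar>p\<bar>"] abs_triangle_ineq[of "2 * g * p" "2 * p * q"]
    by (simp add: abs_mult)
  also have "\<dots> = (1 + C) * (2 * \<bar>g\<bar> * \<bar>p\<bar>) + 2 * C * p\<^sup>2"
    by (simp add: algebra_simps power2_eq_square)
  also have "\<dots> \<le> (1 + C) * (g\<^sup>2 + p\<^sup>2) + 2 * C * (g\<^sup>2 + p\<^sup>2)"
    using amgm assms(1) by (intro add_mono mult_left_mono) auto
  finally show ?thesis by (simp add: algebra_simps)
qed

locale decreasing_hjb_solution =
  fixes \<mu> \<sigma> u0 r \<beta> d :: real
    and h dh d2h :: "real \<Rightarrow> real"
  assumes sigma_pos: "0 < \<sigma>" and u0_pos: "0 < u0" and r_pos: "0 < r"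
    and beta_pos: "0 < \<beta>" and d_pos: "0 < d"
    and solution: "hjb_solution \<mu> \<sigma> u0 r \<beta> d h dh d2h"
    and decreasing: "antimono_on {0..} h"
begin

definition cost :: "real \<Rightarrow> real" where
  "cost z = (if d < z then 1 else 0)"

text \<open>Where the cost is constantly \<open>c\<close>, \<open>(rest_level c, 0)\<close> is the only rest point of the
  equation read as a first-order system in \<open>(h, h')\<close>.\<close>
definition rest_level :: "real \<Rightarrow> real" where
  "rest_level c = (\<beta> * u0 - c) / r"

lemma hjb_ode:
  assumes "0 \<le> z"
  shows "\<sigma>\<^sup>2 / 2 * d2h z = cost z + r * h z + \<mu> * dh z - max 0 ((\<beta> + dh z) * u0)"
proof -
  have "- r * h z - \<mu> * dh z + \<sigma>\<^sup>2 / 2 * d2h z + (SUP u\<in>{0..u0}. (\<beta> + dh z) * u) = cost z"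
    using solution assms unfolding hjb_solution_def cost_def by blast
  then show ?thesis
    using SUP_linear_0_atLeastAtMost[of u0 "\<beta> + dh z"] u0_pos by simp
qed

lemma h_has_derivative:
  assumes "0 < z"
  shows "(h has_real_derivative dh z) (at z)"
proof -
  have "(h has_real_derivative dh z) (at z within {0..})"
    using solution assms unfolding hjb_solution_def by simp
  moreover have "at z within {0..} = at z"
    using assms by (intro at_within_interior) simp
  ultimately show ?thesis by simp
qed

lemma dh_has_derivative:
  assumes "0 < z" "z \<noteq> d"
  shows "(dh has_real_derivative d2h z) (at z)"
proof (cases "z < d")
  case True
  then have "(dh has_real_derivative d2h z) (at z within {0..d})"
    using solution assms unfolding hjb_solution_def by simp
  moreover have "at z within {0..d} = at z"
    using assms True by (intro at_within_Icc_at) auto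
  ultimately show ?thesis by simp
next
  case False
  then show ?thesis using solution assms unfolding hjb_solution_def by simp
qed

lemma continuous_on_h: "continuous_on {0..} h"
  using solution unfolding hjb_solution_def by (intro DERIV_continuous_on) blast

lemma continuous_on_dh: "continuous_on {0..} dh"
  using solution unfolding hjb_solution_def by blast

lemma dh_nonpos:
  assumes "0 \<le> z"
  shows "dh z \<le> 0"
proof (rule ccontr)
  assume "\<not> dh z \<le> 0"
  moreover have "(h has_real_derivative dh z) (at z within {0..})"
    using solution assms unfolding hjb_solution_def by simp
  ultimately obtain \<delta> where "0 < \<delta>" "\<forall>t>0. z + t \<in> {0..} \<longrightarrow> t < \<delta> \<longrightarrow> h z < h (z + t)"
    using has_real_derivative_pos_inc_right[of h "dh z" z "{0..}"] by auto
  then have "h z < h (z + \<delta> / 2)" using assms by simp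
  moreover have "h (z + \<delta> / 2) \<le> h z"
    using monotone_onD[OF decreasing, of z "z + \<delta> / 2"] assms \<open>0 < \<delta>\<close> by simp
  ultimately show False by simp
qed

lemma hjb_deviation_le:
  assumes "0 \<le> z"
  shows "\<bar>\<sigma>\<^sup>2 / 2 * d2h z - (cost z - c)\<bar> \<le> (r + \<bar>\<mu>\<bar> + u0) * (\<bar>h z - rest_level c\<bar> + \<bar>dh z\<bar>)"
proof -
  have "max 0 (\<beta> * u0) = \<beta> * u0" using beta_pos u0_pos by simp
  moreover have "r * rest_level c = \<beta> * u0 - c" using r_pos by (simp add: rest_level_def)
  ultimately have "\<sigma>\<^sup>2 / 2 * d2h z - (cost z - c)
      = r * (h z - rest_level c) + \<mu> * dh z - (max 0 ((\<beta> + dh z) * u0) - max 0 (\<beta> * u0))"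
    unfolding right_diff_distrib using hjb_ode[OF assms] by linarith
  moreover have "\<bar>max 0 ((\<beta> + dh z) * u0) - max 0 (\<beta> * u0)\<bar> \<le> u0 * \<bar>dh z\<bar>"
  proof -
    have "\<bar>max 0 x - max 0 y\<bar> \<le> \<bar>x - y\<bar>" for x y :: real
      by (auto simp: max_def abs_if)
    moreover have "(\<beta> + dh z) * u0 - \<beta> * u0 = u0 * dh z" by (simp add: algebra_simps)
    ultimately show ?thesis using u0_pos by (metis abs_mult abs_of_pos)
  qed
  ultimately have "\<bar>\<sigma>\<^sup>2 / 2 * d2h z - (cost z - c)\<bar>
      \<le> r * \<bar>h z - rest_level c\<bar> + \<bar>\<mu>\<bar> * \<bar>dh z\<bar> + u0 * \<bar>dh z\<bar>"
    using abs_mult[of r "h z - rest_level c"] abs_mult[of \<mu> "dh z"] r_pos by linarith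
  also have "\<dots> \<le> (r + \<bar>\<mu>\<bar> + u0) * (\<bar>h z - rest_level c\<bar> + \<bar>dh z\<bar>)"
    using r_pos u0_pos by (simp add: algebra_simps)
  finally show ?thesis .
qed

lemma flat_piece_is_rest_point:
  assumes "0 < p" "p < q" "d \<notin> {p..q}" "\<forall>z\<in>{p..q}. d2h z = 0"
  shows "h p = rest_level (cost p) \<and> dh p = 0"
proof -
  have dh_const: "dh z = dh p" if "z \<in> {p..q}" for z
  proof (rule DERIV_isconst2[OF \<open>p < q\<close>])
    show "continuous_on {p..q} dh"
      using assms(1) by (intro continuous_on_subset[OF continuous_on_dh]) auto
  next
    fix y assume "p < y" "y < q"
    then show "(dh has_real_derivative 0) (at y)"
      using assms dh_has_derivative[of y] by auto
  qed (use that in auto)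
  obtain \<xi> where "p < \<xi>" "\<xi> < q" "h q - h p = (q - p) * dh \<xi>"
    using MVT2[OF \<open>p < q\<close>, of h dh] assms(1) h_has_derivative by force
  then have h_q: "h q = h p + (q - p) * dh p"
    using dh_const[of \<xi>] by simp
  have "cost q = cost p"
    using assms(2,3) by (auto simp: cost_def)
  then have "cost p + r * h q + \<mu> * dh p = max 0 ((\<beta> + dh p) * u0)"
    and "cost p + r * h p + \<mu> * dh p = max 0 ((\<beta> + dh p) * u0)"
    using hjb_ode[of p] hjb_ode[of q] assms dh_const[of q] by simp_all
  then have "r * h q = r * h p" by linarith
  then have "h q = h p"
    using r_pos by simp
  then have dh_p: "dh p = 0"
    using h_q r_pos assms(2) by simp
  then have "r * h p = \<beta> * u0 - cost p"
    using hjb_ode[of p] assms beta_pos u0_pos by simp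
  then show ?thesis
    using dh_p r_pos by (simp add: rest_level_def field_simps)
qed

lemma rest_point_propagates:
  assumes "0 < x" "\<forall>z\<in>{x<..<y}. z \<noteq> d \<and> cost z = c"
    and "s \<in> {x..y}" "h s = rest_level c" "dh s = 0" "z \<in> {x..y}"
  shows "h z = rest_level c \<and> dh z = 0"
proof -
  define L where "L = rest_level c"
  define w where "w z = (h z - L)\<^sup>2 + (dh z)\<^sup>2" for z
  define w' where "w' z = 2 * (h z - L) * dh z + 2 * dh z * d2h z" for z
  define C where "C = 2 * (r + \<bar>\<mu>\<bar> + u0) / \<sigma>\<^sup>2"
  have "0 \<le> C" using r_pos u0_pos by (simp add: C_def)
  have "continuous_on {x..y} w"
    unfolding w_def using assms(1)
    by (intro continuous_intros continuous_on_subset[OF continuous_on_h]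
        continuous_on_subset[OF continuous_on_dh]) auto
  moreover have "(w has_real_derivative w' z) (at z)" if "z \<in> {x<..<y}" for z
  proof -
    have "0 < z" "z \<noteq> d" using that assms(1,2) by auto
    then have "(h has_real_derivative dh z) (at z)" "(dh has_real_derivative d2h z) (at z)"
      by (simp_all add: h_has_derivative dh_has_derivative)
    then show ?thesis
      unfolding w_def w'_def by (auto intro!: derivative_eq_intros)
  qed
  moreover have "\<bar>w' z\<bar> \<le> (1 + 3 * C) * w z" if "z \<in> {x<..<y}" for z
  proof -
    have "\<bar>\<sigma>\<^sup>2 / 2 * d2h z\<bar> \<le> (r + \<bar>\<mu>\<bar> + u0) * (\<bar>h z - L\<bar> + \<bar>dh z\<bar>)"
      using hjb_deviation_le[of z c] assms(1,2) that by (simp add: L_def)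
    then have "\<bar>d2h z\<bar> \<le> C * (\<bar>h z - L\<bar> + \<bar>dh z\<bar>)"
      using sigma_pos by (simp add: C_def abs_mult field_simps)
    from abs_energy_derivative_le[OF \<open>0 \<le> C\<close> this] show ?thesis
      by (simp add: w_def w'_def)
  qed
  moreover have "w s = 0" using assms(4,5) by (simp add: w_def L_def)
  ultimately have "w z = 0"
    using gronwall_zero[of x y w w' "1 + 3 * C" s z] assms(3,6) by (simp add: w_def)
  then show ?thesis
    by (simp add: w_def L_def add_nonneg_eq_0_iff)
qed

lemma not_rest_point_at_threshold_from_below: "\<not> (h d = rest_level 0 \<and> dh d = 0)"
proof
  assume rest: "h d = rest_level 0 \<and> dh d = 0"
  define G where "G z = (r + \<bar>\<mu>\<bar> + u0) * (\<bar>h z - rest_level 0\<bar> + \<bar>dh z\<bar>)" for z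
  have "isCont G d"
    unfolding G_def using d_pos h_has_derivative[THEN DERIV_isCont]
      continuous_on_interior[OF continuous_on_dh, of d]
    by (intro continuous_intros) auto
  then have "(G \<longlongrightarrow> 0) (at d)"
    using rest by (simp add: G_def isCont_def)
  then have "\<forall>\<^sub>F z in at d. G z < 1"
    by (rule order_tendstoD) simp
  then obtain \<delta> where "0 < \<delta>" and G_small: "\<And>z. z \<noteq> d \<Longrightarrow> dist z d < \<delta> \<Longrightarrow> G z < 1"
    unfolding eventually_at by auto
  have "dh d < dh (d + \<delta> / 2)"
  proof (rule DERIV_pos_imp_increasing_open[of d "d + \<delta> / 2" dh])
    fix z assume z: "d < z" "z < d + \<delta> / 2"
    have "\<bar>\<sigma>\<^sup>2 / 2 * d2h z - 1\<bar> < 1"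
      using hjb_deviation_le[of z 0] G_small[of z] z d_pos \<open>0 < \<delta>\<close>
      by (simp add: cost_def G_def dist_real_def)
    then have "0 < \<sigma>\<^sup>2 / 2 * d2h z" by linarith
    then have "0 < d2h z"
      using sigma_pos zero_less_mult_pos[of "\<sigma>\<^sup>2 / 2" "d2h z"] by simp
    then show "\<exists>l. (dh has_real_derivative l) (at z) \<and> 0 < l"
      using dh_has_derivative[of z] z d_pos by auto
  next
    show "continuous_on {d..d + \<delta> / 2} dh"
      using d_pos by (intro continuous_on_subset[OF continuous_on_dh]) auto
  qed (use \<open>0 < \<delta>\<close> in simp)
  then show False
    using rest dh_nonpos[of "d + \<delta> / 2"] d_pos \<open>0 < \<delta>\<close> by simp
qed

lemma not_rest_point_at_threshold_from_above: "\<not> (h d = rest_level 1 \<and> dh d = 0)"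
proof
  assume rest: "h d = rest_level 1 \<and> dh d = 0"
  then have "\<sigma>\<^sup>2 / 2 * d2h d = -1"
    using hjb_deviation_le[of d 1] d_pos by (simp add: cost_def)
  then have "d2h d < 0"
    using sigma_pos mult_nonneg_nonneg[of "\<sigma>\<^sup>2 / 2" "d2h d"] by (cases "d2h d < 0") auto
  moreover have "(dh has_real_derivative d2h d) (at d within {0..d})"
    using solution d_pos unfolding hjb_solution_def by simp
  ultimately obtain \<delta> where "0 < \<delta>" "\<forall>t>0. d - t \<in> {0..d} \<longrightarrow> t < \<delta> \<longrightarrow> dh d < dh (d - t)"
    using has_real_derivative_neg_dec_left[of dh "d2h d" d "{0..d}"] by auto
  then have "dh d < dh (d - min \<delta> d / 2)"
    using d_pos by simp
  moreover have "0 \<le> d - min \<delta> d / 2"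
    using min.cobounded2[of \<delta> d] d_pos by linarith
  ultimately show False
    using rest dh_nonpos[of "d - min \<delta> d / 2"] by simp
qed

theorem d2h_not_zero_on_interval:
  assumes "0 \<le> a" "a < b"
  shows "\<exists>z\<in>{a<..<b}. d2h z \<noteq> 0"
proof (rule ccontr)
  assume "\<not> (\<exists>z\<in>{a<..<b}. d2h z \<noteq> 0)"
  then have flat: "\<forall>z\<in>{a<..<b}. d2h z = 0" by simp
  obtain p q where "a < p" "p < q" "q < b" "d \<notin> {p..q}"
    using closed_subinterval_avoiding[OF \<open>a < b\<close>] .
  moreover have "0 < p" using \<open>0 \<le> a\<close> \<open>a < p\<close> by simp
  ultimately have rest: "h p = rest_level (cost p) \<and> dh p = 0"
    using flat by (intro flat_piece_is_rest_point) auto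
  show False
  proof (cases "p < d")
    case True
    then have "h d = rest_level 0 \<and> dh d = 0"
      using rest \<open>0 < p\<close>
      by (intro rest_point_propagates[of p d 0 p]) (auto simp: cost_def)
    with not_rest_point_at_threshold_from_below show False ..
  next
    case False
    with \<open>d \<notin> {p..q}\<close> \<open>p < q\<close> have "d < p" by auto
    then have "h d = rest_level 1 \<and> dh d = 0"
      using rest d_pos
      by (intro rest_point_propagates[of d p 1 p]) (auto simp: cost_def)
    with not_rest_point_at_threshold_from_above show False ..
  qed
qed

end

theorem lemma2p2:
  fixes \<mu> \<sigma> u0 r \<beta> d :: real
    and h dh d2h :: "real \<Rightarrow> real"
  assumes "\<sigma> > 0" "u0 > 0" "r > 0" "\<beta> > 0" "d > 0"
    and "hjb_solution \<mu> \<sigma> u0 r \<beta> d h dh d2h"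
    and "antimono_on {0..} h"
  shows "\<not> (\<exists>a b. 0 \<le> a \<and> a < b \<and> (\<forall>z\<in>{a<..<b}. d2h z = 0))"
proof -
  interpret decreasing_hjb_solution \<mu> \<sigma> u0 r \<beta> d h dh d2h
    using assms by unfold_locales
  show ?thesis
    using d2h_not_zero_on_interval by fastforce
qed

end
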